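(* In the asynchronous online testing setting described in the context, suppose that the null $p$-values are independent of each other and of the non-null $p$-values, and that the test levels $\alpha_t$ (and candidacy thresholds $\lambda_t$) are monotone. Then $\mathrm{LORD}_{\mathrm{async}}$ and $\mathrm{SAFFRON}_{\mathrm{async}}$ with target level $\alpha$ both guarantee $\mathrm{FDR}(t)\le\alpha$ for all $t\in\mathbb{N}$.
   Context: Hypotheses $H_1,H_2,\dots$ are tested; the test of $H_t$ starts at step $t$ with test level $\alpha_t\ge0$ (and, for SAFFRON-type procedures, a candidacy threshold $\lambda_t$ with $\alpha_t\le\lambda_t<1$) and produces a $p$-value $P_t$; if $H_t$ is a true null, $P_t$ is super-uniform: $\mathbb{P}(P_t\le u)\le u$ for all $u\in[0,1]$. $\mathcal{H}^0$ is the fixed set of true null indices. Test $t$ has a fixed decision time $E_t\ge t$. For each step $s$, let $\mathcal{R}_s=\{i\in[s]: E_i=s,\ P_i\le\alpha_i\}$ and $\mathcal{C}_s=\{i\in[s]:E_i=s,\ P_i\le\lambda_i\}$. In $\mathrm{LORD}_{\mathrm{async}}$, $\alpha_t=f_t(\mathcal{R}_1,\dots,\mathcal{R}_{t-1})$ for deterministic functions $f_t$, chosen so that for all $t$, $\sum_{j\le t}\alpha_j\le\alpha\big((\sum_{j\le t}\mathbf{1}\{P_j\le\alpha_j,\ E_j<t\})\vee1\big)$. In $\mathrm{SAFFRON}_{\mathrm{async}}$, $\alpha_t=g_t(\mathcal{R}_1,\mathcal{C}_1,\dots,\mathcal{R}_{t-1},\mathcal{C}_{t-1})$ and $\lambda_t=h_t(\mathcal{R}_1,\mathcal{C}_1,\dots,\mathcal{R}_{t-1},\mathcal{C}_{t-1})$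 for deterministic $g_t,h_t$, chosen so that for all $t$, $\sum_{j\le t}\frac{\alpha_j}{1-\lambda_j}\big(\mathbf{1}\{P_j>\lambda_j,\ E_j<t\}+\mathbf{1}\{E_j\ge t\}\big)\le\alpha\big((\sum_{j\le t}\mathbf{1}\{P_j\le\alpha_j,\ E_j<t\})\vee1\big)$. Monotone means: each of $f_t$ (resp. $g_t,h_t$) does not decrease when any argument $\mathcal{R}_i$ (or $\mathcal{C}_i$) is replaced by a superset, the other arguments fixed. $\mathcal{R}(t)=\{i\in[t]:E_i\le t,\ P_i\le\alpha_i\}$, $\mathcal{V}(t)=\mathcal{R}(t)\cap\mathcal{H}^0$, and $\mathrm{FDR}(t)=\mathbb{E}\big[|\mathcal{V}(t)|/(|\mathcal{R}(t)|\vee1)\big]$. *)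

theory Defs
  imports "HOL-Probability.Probability"
begin

text \<open>Indices of hypotheses start at 1. A realization of the p-values is p :: nat => real.\<close>

definition dec_set :: "(nat \<Rightarrow> nat) \<Rightarrow> (nat \<Rightarrow> real) \<Rightarrow> (nat \<Rightarrow> real) \<Rightarrow> nat \<Rightarrow> nat set" where
  "dec_set E p a s = {i \<in> {1..s}. E i = s \<and> p i \<le> a i}"

definition adm_hist :: "nat \<Rightarrow> (nat \<Rightarrow> nat set) \<Rightarrow> bool" where
  "adm_hist t R \<longleftrightarrow> (\<forall>s. R s \<subseteq> (if 1 \<le> s \<and> s < t then {1..s} else {}))"

text \<open>LORD_async test levels: lord_lv f E p n i = alpha_i for i <= n.\<close>
primrec lord_lv :: "(nat \<Rightarrow> (nat \<Rightarrow> nat set) \<Rightarrow> real) \<Rightarrow> (nat \<Rightarrow> nat) \<Rightarrow> (nat \<Rightarrow> real)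
    \<Rightarrow> nat \<Rightarrow> nat \<Rightarrow> real" where
  "lord_lv f E p 0 = (\<lambda>i. 0)"
| "lord_lv f E p (Suc n) =
     (lord_lv f E p n)(Suc n := f (Suc n)
        (\<lambda>s. if s \<le> n then dec_set E p (lord_lv f E p n) s else {}))"

definition lord_alpha :: "(nat \<Rightarrow> (nat \<Rightarrow> nat set) \<Rightarrow> real) \<Rightarrow> (nat \<Rightarrow> nat) \<Rightarrow> (nat \<Rightarrow> real)
    \<Rightarrow> nat \<Rightarrow> real" where
  "lord_alpha f E p t = lord_lv f E p t t"

primrec saff_lv :: "(nat \<Rightarrow> (nat \<Rightarrow> nat set) \<Rightarrow> (nat \<Rightarrow> nat set) \<Rightarrow> real)
    \<Rightarrow> (nat \<Rightarrow> (nat \<Rightarrow> nat set) \<Rightarrow> (nat \<Rightarrow> nat set) \<Rightarrow> real)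
    \<Rightarrow> (nat \<Rightarrow> nat) \<Rightarrow> (nat \<Rightarrow> real) \<Rightarrow> nat \<Rightarrow> (nat \<Rightarrow> real) \<times> (nat \<Rightarrow> real)" where
  "saff_lv g h E p 0 = (\<lambda>i. 0, \<lambda>i. 0)"
| "saff_lv g h E p (Suc n) =
     (let a = fst (saff_lv g h E p n); l = snd (saff_lv g h E p n);
          Rs = (\<lambda>s. if s \<le> n then dec_set E p a s else {});
          Cs = (\<lambda>s. if s \<le> n then dec_set E p l s else {})
      in (a(Suc n := g (Suc n) Rs Cs), l(Suc n := h (Suc n) Rs Cs)))"

definition saff_alpha where
  "saff_alpha g h E p t = fst (saff_lv g h E p t) t"

definition saff_lambda where
  "saff_lambda g h E p t = snd (saff_lv g h E p t) t"

definition mono_rule1 :: "(nat \<Rightarrow> (nat \<Rightarrow> nat set) \<Rightarrow> real) \<Rightarrow> bool" where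
  "mono_rule1 f \<longleftrightarrow> (\<forall>t\<ge>1. \<forall>R R'. adm_hist t R \<and> adm_hist t R' \<and> (\<forall>s. R s \<subseteq> R' s)
      \<longrightarrow> f t R \<le> f t R')"

definition mono_rule2 :: "(nat \<Rightarrow> (nat \<Rightarrow> nat set) \<Rightarrow> (nat \<Rightarrow> nat set) \<Rightarrow> real) \<Rightarrow> bool" where
  "mono_rule2 g \<longleftrightarrow> (\<forall>t\<ge>1. \<forall>R C R' C'. adm_hist t R \<and> adm_hist t C \<and> adm_hist t R' \<and> adm_hist t C'
      \<and> (\<forall>s. R s \<subseteq> R' s) \<and> (\<forall>s. C s \<subseteq> C' s) \<longrightarrow> g t R C \<le> g t R' C')"

definition rej_before :: "(nat \<Rightarrow> nat) \<Rightarrow> (nat \<Rightarrow> real) \<Rightarrow> (nat \<Rightarrow> real) \<Rightarrow> nat \<Rightarrow> nat" where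
  "rej_before E p a t = card {j \<in> {1..t}. p j \<le> a j \<and> E j < t}"

definition rej_set :: "(nat \<Rightarrow> nat) \<Rightarrow> (nat \<Rightarrow> real) \<Rightarrow> (nat \<Rightarrow> real) \<Rightarrow> nat \<Rightarrow> nat set" where
  "rej_set E p a t = {i \<in> {1..t}. E i \<le> t \<and> p i \<le> a i}"

definition FDP :: "nat set \<Rightarrow> (nat \<Rightarrow> nat) \<Rightarrow> (nat \<Rightarrow> real) \<Rightarrow> (nat \<Rightarrow> real) \<Rightarrow> nat \<Rightarrow> real" where
  "FDP H0 E p a t = real (card (rej_set E p a t \<inter> H0)) / real (max (card (rej_set E p a t)) 1)"

definition FDR :: "'w measure \<Rightarrow> nat set \<Rightarrow> (nat \<Rightarrow> nat) \<Rightarrow> (nat \<Rightarrow> 'w \<Rightarrow> real)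
    \<Rightarrow> ((nat \<Rightarrow> real) \<Rightarrow> nat \<Rightarrow> real) \<Rightarrow> nat \<Rightarrow> real" where
  "FDR M H0 E P A t = prob_space.expectation M (\<lambda>\<omega>. FDP H0 E (\<lambda>i. P i \<omega>) (A (\<lambda>i. P i \<omega>)) t)"

text \<open>Null p-values are mutually independent and independent of the family of non-null p-values.\<close>
definition null_indep :: "'w measure \<Rightarrow> nat set \<Rightarrow> (nat \<Rightarrow> 'w \<Rightarrow> real) \<Rightarrow> bool" where
  "null_indep M H0 P \<longleftrightarrow>
     (let S = (\<lambda>k. case k of Some i \<Rightarrow> {i} | None \<Rightarrow> - H0) in
      prob_space.indep_vars M (\<lambda>k. Pi\<^sub>M (S k) (\<lambda>_. borel))
        (\<lambda>k \<omega>. restrict (\<lambda>j. P j \<omega>) (S k)) (Some ` H0 \<union> {None}))"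

end

theory Submission
  imports Defs
begin

(*
  FDP(t) is the sum, over the true nulls i <= t, of 1{P_i <= alpha_i} w_i with
  w_i = 1{E_i <= t} / max |R(t)| 1. Let Q be P with P_i replaced by 0. As alpha_i and lambda_i
  only depend on p-values decided before step i <= E_i, they are the same for Q and P; by
  monotonicity of the rules the rejection set can only grow when passing from P to Q, and it
  does not change at all when H_i is rejected anyway (under Q, H_i is a rejected candidate
  since 0 <= alpha_i <= lambda_i). So the i-th term equals 1{P_i <= alpha_i(Q)} w_i(Q), and as
  P_i is super-uniform and independent of Q, its expectation is at most
  E[alpha_i(Q) w_i(Q)] <= E[alpha_i w_i(P)]. For SAFFRON, 1 - lambda_i <= P(P_i > lambda_i | Q)
  bounds this further by E[alpha_i / (1 - lambda_i) 1{P_i > lambda_i} w_i(P)]. Summing over i,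
  the budget constraint together with |R(t)| >= (number of rejections decided before t)
  yields FDR(t) <= alpha.
*)

lemma (in prob_space) indep_var_nn_integral:
  assumes ind: "indep_var N1 X N2 Y" and [measurable]: "H \<in> borel_measurable (N1 \<Otimes>\<^sub>M N2)"
  shows "(\<integral>\<^sup>+\<omega>. H (X \<omega>, Y \<omega>) \<partial>M) = (\<integral>\<^sup>+y. \<integral>\<^sup>+x. H (x, y) \<partial>distr M N1 X \<partial>distr M N2 Y)"
proof -
  have rv[measurable]: "X \<in> M \<rightarrow>\<^sub>M N1" "Y \<in> M \<rightarrow>\<^sub>M N2"
    and prod: "distr M N1 X \<Otimes>\<^sub>M distr M N2 Y = distr M (N1 \<Otimes>\<^sub>M N2) (\<lambda>\<omega>. (X \<omega>, Y \<omega>))"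
    using ind unfolding indep_var_distribution_eq by auto
  interpret X: prob_space "distr M N1 X" by (simp add: prob_space_distr)
  interpret Y: prob_space "distr M N2 Y" by (simp add: prob_space_distr)
  interpret pair_sigma_finite "distr M N1 X" "distr M N2 Y" by unfold_locales
  have "(\<integral>\<^sup>+y. \<integral>\<^sup>+x. H (x, y) \<partial>distr M N1 X \<partial>distr M N2 Y)
      = integral\<^sup>N (distr M (N1 \<Otimes>\<^sub>M N2) (\<lambda>\<omega>. (X \<omega>, Y \<omega>))) H"
    by (subst nn_integral_snd) (simp_all add: prod)
  also have "\<dots> = (\<integral>\<^sup>+\<omega>. H (X \<omega>, Y \<omega>) \<partial>M)"
    by (simp add: nn_integral_distr)
  finally show ?thesis ..
qed

lemma (in prob_space) indep_var_nn_integral_mono: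
  assumes ind: "indep_var N1 X N2 Y"
    and [measurable]: "case_prod F \<in> borel_measurable (N1 \<Otimes>\<^sub>M N2)" "case_prod G \<in> borel_measurable (N1 \<Otimes>\<^sub>M N2)"
    and le: "\<And>y. y \<in> space N2 \<Longrightarrow> (\<integral>\<^sup>+x. F x y \<partial>distr M N1 X) \<le> (\<integral>\<^sup>+x. G x y \<partial>distr M N1 X)"
  shows "(\<integral>\<^sup>+\<omega>. F (X \<omega>) (Y \<omega>) \<partial>M) \<le> (\<integral>\<^sup>+\<omega>. G (X \<omega>) (Y \<omega>) \<partial>M)"
proof -
  have "(\<integral>\<^sup>+y. \<integral>\<^sup>+x. F x y \<partial>distr M N1 X \<partial>distr M N2 Y) \<le> (\<integral>\<^sup>+y. \<integral>\<^sup>+x. G x y \<partial>distr M N1 X \<partial>distr M N2 Y)"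
    by (intro nn_integral_mono le) simp
  then show ?thesis
    using indep_var_nn_integral[OF ind, of "case_prod F"] indep_var_nn_integral[OF ind, of "case_prod G"]
    by simp
qed

lemma (in prob_space) prob_le_of_superuniform:
  assumes "\<And>u. 0 \<le> u \<Longrightarrow> u \<le> 1 \<Longrightarrow> prob {\<omega> \<in> space M. X \<omega> \<le> u} \<le> u" and "0 \<le> a"
  shows "prob {\<omega> \<in> space M. X \<omega> \<le> a} \<le> a"
  using assms prob_le_1 by (cases "a \<le> 1") (auto intro: order_trans)

lemma (in prob_space) nn_integral_distr_if_mem:
  fixes \<pi> :: "'b \<Rightarrow> real"
  assumes [measurable]: "Z \<in> M \<rightarrow>\<^sub>M N" "\<pi> \<in> borel_measurable N" "A \<in> sets borel" and "0 \<le> c"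
  shows "(\<integral>\<^sup>+z. ennreal (if \<pi> z \<in> A then c else 0) \<partial>distr M N Z)
    = ennreal (c * prob {\<omega> \<in> space M. \<pi> (Z \<omega>) \<in> A})"
proof -
  have "(\<integral>\<^sup>+z. ennreal (if \<pi> z \<in> A then c else 0) \<partial>distr M N Z)
      = (\<integral>\<^sup>+\<omega>. ennreal c * indicator {\<omega> \<in> space M. \<pi> (Z \<omega>) \<in> A} \<omega> \<partial>M)"
    by (subst nn_integral_distr) (auto intro!: nn_integral_cong simp: indicator_def)
  also have "\<dots> = ennreal (c * prob {\<omega> \<in> space M. \<pi> (Z \<omega>) \<in> A})"
    using \<open>0 \<le> c\<close> by (simp add: nn_integral_cmult_indicator emeasure_eq_measure ennreal_mult)
  finally show ?thesis .
qed

lemma (in prob_space) nn_integral_distr_const: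
  assumes "Z \<in> M \<rightarrow>\<^sub>M N"
  shows "(\<integral>\<^sup>+z. c \<partial>distr M N Z) = c"
  using prob_space.emeasure_space_1[OF prob_space_distr[OF assms]] by simp

lemma (in prob_space) superuniform_indep_threshold_le:
  fixes \<pi> :: "'b \<Rightarrow> real"
  assumes ind: "indep_var N1 Z N2 Y" and [measurable]: "\<pi> \<in> borel_measurable N1"
    and su: "\<And>u. 0 \<le> u \<Longrightarrow> u \<le> 1 \<Longrightarrow> prob {\<omega> \<in> space M. \<pi> (Z \<omega>) \<le> u} \<le> u"
    and [measurable]: "a \<in> borel_measurable N2" "\<phi> \<in> borel_measurable N2"
    and nonneg: "\<And>y. y \<in> space N2 \<Longrightarrow> 0 \<le> a y" "\<And>y. y \<in> space N2 \<Longrightarrow> 0 \<le> \<phi> y"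
  shows "(\<integral>\<^sup>+\<omega>. ennreal (if \<pi> (Z \<omega>) \<le> a (Y \<omega>) then \<phi> (Y \<omega>) else 0) \<partial>M)
    \<le> (\<integral>\<^sup>+\<omega>. ennreal (a (Y \<omega>) * \<phi> (Y \<omega>)) \<partial>M)"
proof (rule indep_var_nn_integral_mono[OF ind, where F="\<lambda>z y. ennreal (if \<pi> z \<le> a y then \<phi> y else 0)"])
  have [measurable]: "Z \<in> M \<rightarrow>\<^sub>M N1" using ind by (rule indep_var_rv1)
  fix y assume y: "y \<in> space N2"
  have "\<phi> y * prob {\<omega> \<in> space M. \<pi> (Z \<omega>) \<le> a y} \<le> a y * \<phi> y"
    using prob_le_of_superuniform[OF su nonneg(1)[OF y]] nonneg(2)[OF y]
    by (simp add: mult.commute mult_left_mono)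
  then show "(\<integral>\<^sup>+z. ennreal (if \<pi> z \<le> a y then \<phi> y else 0) \<partial>distr M N1 Z)
      \<le> (\<integral>\<^sup>+z. ennreal (a y * \<phi> y) \<partial>distr M N1 Z)"
    using nn_integral_distr_if_mem[of Z N1 \<pi> "{..a y}" "\<phi> y"] nonneg(2)[OF y]
    by (subst nn_integral_distr_const) (simp_all add: ennreal_leI)
qed measurable

lemma (in prob_space) superuniform_indep_threshold_ge:
  fixes \<pi> :: "'b \<Rightarrow> real"
  assumes ind: "indep_var N1 Z N2 Y" and [measurable]: "\<pi> \<in> borel_measurable N1"
    and su: "\<And>u. 0 \<le> u \<Longrightarrow> u \<le> 1 \<Longrightarrow> prob {\<omega> \<in> space M. \<pi> (Z \<omega>) \<le> u} \<le> u"
    and [measurable]: "l \<in> borel_measurable N2" "c \<in> borel_measurable N2"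
    and nonneg: "\<And>y. y \<in> space N2 \<Longrightarrow> 0 \<le> l y" "\<And>y. y \<in> space N2 \<Longrightarrow> 0 \<le> c y"
  shows "(\<integral>\<^sup>+\<omega>. ennreal (c (Y \<omega>) * (1 - l (Y \<omega>))) \<partial>M)
    \<le> (\<integral>\<^sup>+\<omega>. ennreal (if l (Y \<omega>) < \<pi> (Z \<omega>) then c (Y \<omega>) else 0) \<partial>M)"
proof (rule indep_var_nn_integral_mono[OF ind, where G="\<lambda>z y. ennreal (if l y < \<pi> z then c y else 0)"])
  have [measurable]: "Z \<in> M \<rightarrow>\<^sub>M N1" using ind by (rule indep_var_rv1)
  fix y assume y: "y \<in> space N2"
  have "{\<omega> \<in> space M. l y < \<pi> (Z \<omega>)} = space M - {\<omega> \<in> space M. \<pi> (Z \<omega>) \<le> l y}"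
    by auto
  then have "prob {\<omega> \<in> space M. l y < \<pi> (Z \<omega>)} = 1 - prob {\<omega> \<in> space M. \<pi> (Z \<omega>) \<le> l y}"
    by (simp add: prob_compl)
  then have "c y * (1 - l y) \<le> c y * prob {\<omega> \<in> space M. l y < \<pi> (Z \<omega>)}"
    using prob_le_of_superuniform[OF su nonneg(1)[OF y]] nonneg(2)[OF y] by (simp add: mult_left_mono)
  then show "(\<integral>\<^sup>+z. ennreal (c y * (1 - l y)) \<partial>distr M N1 Z)
      \<le> (\<integral>\<^sup>+z. ennreal (if l y < \<pi> z then c y else 0) \<partial>distr M N1 Z)"
    using nn_integral_distr_if_mem[of Z N1 \<pi> "{l y<..}" "c y"] nonneg(2)[OF y]
    by (subst nn_integral_distr_const) (simp_all add: ennreal_leI)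
qed measurable

lemma nn_integral_sum_ennreal:
  assumes "\<And>i. i \<in> I \<Longrightarrow> f i \<in> borel_measurable M" and "\<And>i x. i \<in> I \<Longrightarrow> 0 \<le> f i x"
  shows "(\<integral>\<^sup>+x. ennreal (\<Sum>i\<in>I. f i x) \<partial>M) = (\<Sum>i\<in>I. \<integral>\<^sup>+x. ennreal (f i x) \<partial>M)"
proof -
  have "(\<integral>\<^sup>+x. ennreal (\<Sum>i\<in>I. f i x) \<partial>M) = (\<integral>\<^sup>+x. (\<Sum>i\<in>I. ennreal (f i x)) \<partial>M)"
    by (intro nn_integral_cong) (simp add: assms(2))
  also have "\<dots> = (\<Sum>i\<in>I. \<integral>\<^sup>+x. ennreal (f i x) \<partial>M)"
    by (intro nn_integral_sum measurable_compose[OF assms(1) measurable_ennreal])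
  finally show ?thesis .
qed

abbreviation pvalues :: "(nat \<Rightarrow> real) measure" where
  "pvalues \<equiv> Pi\<^sub>M UNIV (\<lambda>_. borel)"

lemma pvalues_coord_measurable [measurable]: "(\<lambda>p. p i) \<in> borel_measurable pvalues"
  by (rule measurable_component_singleton) simp

lemma measurable_component_component:
  assumes "k \<in> K" and "j \<in> S k"
  shows "(\<lambda>z. z k j) \<in> Pi\<^sub>M K (\<lambda>k. Pi\<^sub>M (S k) (\<lambda>_. N)) \<rightarrow>\<^sub>M N"
proof -
  have "(\<lambda>z. z k) \<in> Pi\<^sub>M K (\<lambda>k. Pi\<^sub>M (S k) (\<lambda>_. N)) \<rightarrow>\<^sub>M Pi\<^sub>M (S k) (\<lambda>_. N)"
    using measurable_component_singleton[OF assms(1)] .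
  moreover have "(\<lambda>w. w j) \<in> Pi\<^sub>M (S k) (\<lambda>_. N) \<rightarrow>\<^sub>M N"
    using measurable_component_singleton[OF assms(2)] .
  ultimately show ?thesis by (rule measurable_compose)
qed

lemma null_indep_leave_one_out:
  assumes "prob_space M" and "null_indep M H0 P" and "i \<in> H0"
  shows "prob_space.indep_var M pvalues (\<lambda>\<omega>. (\<lambda>_. 0)(i := P i \<omega>)) pvalues (\<lambda>\<omega>. (\<lambda>j. P j \<omega>)(i := 0))"
proof -
  interpret prob_space M by fact
  define S where "S k = (case k of Some i \<Rightarrow> {i} | None \<Rightarrow> - H0)" for k
  define I where "I = Some ` H0 \<union> {None}"
  define N where "N k = Pi\<^sub>M (S k) (\<lambda>_. borel :: real measure)" for k
  define X where "X k \<omega> = restrict (\<lambda>j. P j \<omega>) (S k)" for k \<omega>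
  \<comment> \<open>The member of the independent family that contains P_j\<close>
  define block where "block j = (if j \<in> H0 then Some j else None)" for j
  have "indep_vars N X I"
    using assms(2) unfolding null_indep_def Let_def S_def N_def X_def I_def by simp
  then have ind: "indep_var (Pi\<^sub>M {Some i} N) (\<lambda>\<omega>. restrict (\<lambda>k. X k \<omega>) {Some i})
      (Pi\<^sub>M (I - {Some i}) N) (\<lambda>\<omega>. restrict (\<lambda>k. X k \<omega>) (I - {Some i}))"
    by (rule indep_var_restrict) (auto simp: I_def assms(3))
  have coord: "(\<lambda>z. z k j) \<in> Pi\<^sub>M K N \<rightarrow>\<^sub>M borel" if "k \<in> K" "j \<in> S k" for K k j
    unfolding N_def using that by (rule measurable_component_component)
  have "(\<lambda>z. (\<lambda>_. 0)(i := z (Some i) i)) \<in> Pi\<^sub>M {Some i} N \<rightarrow>\<^sub>M pvalues"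
  proof (rule measurable_PiM_single')
    show "(\<lambda>z. ((\<lambda>_. 0)(i := z (Some i) i)) j) \<in> Pi\<^sub>M {Some i} N \<rightarrow>\<^sub>M borel" for j
      by (cases "j = i") (auto intro: coord simp: S_def)
  qed simp
  moreover have "(\<lambda>z. (\<lambda>j. z (block j) j)(i := 0)) \<in> Pi\<^sub>M (I - {Some i}) N \<rightarrow>\<^sub>M pvalues"
  proof (rule measurable_PiM_single')
    show "(\<lambda>z. ((\<lambda>j. z (block j) j)(i := 0)) j) \<in> Pi\<^sub>M (I - {Some i}) N \<rightarrow>\<^sub>M borel" for j
      by (cases "j = i") (auto intro: coord simp: block_def I_def S_def)
  qed simp
  ultimately have "indep_var pvalues ((\<lambda>z. (\<lambda>_. 0)(i := z (Some i) i)) \<circ> (\<lambda>\<omega>. restrict (\<lambda>k. X k \<omega>) {Some i}))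
      pvalues ((\<lambda>z. (\<lambda>j. z (block j) j)(i := 0)) \<circ> (\<lambda>\<omega>. restrict (\<lambda>k. X k \<omega>) (I - {Some i})))"
    by (rule indep_var_compose[OF ind])
  moreover have "(\<lambda>z. (\<lambda>_. 0)(i := z (Some i) i)) \<circ> (\<lambda>\<omega>. restrict (\<lambda>k. X k \<omega>) {Some i})
      = (\<lambda>\<omega>. (\<lambda>_. 0)(i := P i \<omega>))"
    by (auto simp: fun_eq_iff X_def S_def)
  moreover have "(\<lambda>z. (\<lambda>j. z (block j) j)(i := 0)) \<circ> (\<lambda>\<omega>. restrict (\<lambda>k. X k \<omega>) (I - {Some i}))
      = (\<lambda>\<omega>. (\<lambda>j. P j \<omega>)(i := 0))"
    by (auto simp: fun_eq_iff X_def S_def I_def block_def)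
  ultimately show ?thesis by simp
qed

definition fdp_weight :: "(nat \<Rightarrow> nat) \<Rightarrow> (nat \<Rightarrow> real) \<Rightarrow> (nat \<Rightarrow> real) \<Rightarrow> nat \<Rightarrow> nat \<Rightarrow> real" where
  "fdp_weight E p a t i = (if E i \<le> t then 1 / real (max (card (rej_set E p a t)) 1) else 0)"

lemma fdp_weight_nonneg: "0 \<le> fdp_weight E p a t i"
  by (simp add: fdp_weight_def)

lemma finite_rej_set: "finite (rej_set E p a t)"
  by (simp add: rej_set_def)

lemma real_card_rej_set:
  "real (card (rej_set E p a t)) = (\<Sum>j\<in>{1..t}. if E j \<le> t \<and> p j \<le> a j then 1 else 0)"
  unfolding rej_set_def by (subst sum.inter_filter[symmetric]) simp_all

lemma FDP_eq_sum_fdp_weight: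
  "FDP H0 E p a t = (\<Sum>i\<in>{1..t} \<inter> H0. if p i \<le> a i then fdp_weight E p a t i else 0)"
proof -
  have "rej_set E p a t \<inter> H0 = {i \<in> {1..t} \<inter> H0. E i \<le> t \<and> p i \<le> a i}"
    by (auto simp: rej_set_def)
  then have "real (card (rej_set E p a t \<inter> H0)) = (\<Sum>i\<in>{1..t} \<inter> H0. if E i \<le> t \<and> p i \<le> a i then 1 else 0)"
    by (subst sum.inter_filter[symmetric]) simp_all
  then show ?thesis
    by (auto simp: FDP_def fdp_weight_def sum_divide_distrib intro!: sum.cong)
qed

lemma rej_before_le_card_rej_set: "rej_before E p a t \<le> card (rej_set E p a t)"
  unfolding rej_before_def rej_set_def by (rule card_mono) auto

lemma divide_rej_count_le:
  assumes "0 \<le> S" and budget: "S \<le> \<alpha> * real (max (rej_before E p a t) 1)"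
  shows "S / real (max (card (rej_set E p a t)) 1) \<le> \<alpha>"
proof -
  have "0 \<le> \<alpha>"
  proof (rule ccontr)
    assume "\<not> 0 \<le> \<alpha>"
    then have "\<alpha> * real (max (rej_before E p a t) 1) < 0" by (simp add: mult_neg_pos)
    with assms show False by linarith
  qed
  moreover have "real (max (rej_before E p a t) 1) \<le> real (max (card (rej_set E p a t)) 1)"
    using rej_before_le_card_rej_set[of E p a t] by simp
  ultimately have "S \<le> \<alpha> * real (max (card (rej_set E p a t)) 1)"
    using budget by (meson mult_left_mono order_trans)
  then show ?thesis by (simp add: divide_le_eq)
qed

definition history :: "(nat \<Rightarrow> nat) \<Rightarrow> (nat \<Rightarrow> bool) \<Rightarrow> nat \<Rightarrow> nat \<Rightarrow> nat set" where
  "history E b t = (\<lambda>s. if s < t then {i \<in> {1..s}. E i = s \<and> b i} else {})"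

lemma adm_hist_history: "adm_hist t (history E b t)"
  by (auto simp: adm_hist_def history_def)

lemma history_cong:
  assumes "\<And>i. i < t \<Longrightarrow> E i < t \<Longrightarrow> b i = b' i"
  shows "history E b t = history E b' t"
  using assms by (auto simp: history_def fun_eq_iff)

lemma history_mono:
  assumes "\<And>i. i < t \<Longrightarrow> b i \<Longrightarrow> b' i"
  shows "history E b t s \<subseteq> history E b' t s"
  using assms by (auto simp: history_def)

lemma saff_lv_eq:
  "saff_lv g h E p n = (\<lambda>j. if j \<le> n then saff_alpha g h E p j else 0, \<lambda>j. if j \<le> n then saff_lambda g h E p j else 0)"
proof (induction n)
  case (Suc n)
  then show ?case
    by (auto simp: fun_eq_iff Let_def saff_alpha_def saff_lambda_def le_Suc_eq)
qed (simp add: fun_eq_iff saff_alpha_def saff_lambda_def)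

lemma saff_lv_lord_lv: "saff_lv (\<lambda>t R C. f t R) (\<lambda>t R C. f t R) E p n = (lord_lv f E p n, lord_lv f E p n)"
  by (induction n) (simp_all add: Let_def fun_upd_def)

lemma lord_alpha_eq_saff_alpha: "lord_alpha f E = saff_alpha (\<lambda>t R C. f t R) (\<lambda>t R C. f t R) E"
  by (simp add: fun_eq_iff lord_alpha_def saff_alpha_def saff_lv_lord_lv)

lemma finite_bounded_predicates: "finite {b :: nat \<Rightarrow> bool. \<forall>i. b i \<longrightarrow> i < t}"
proof (rule finite_subset)
  show "{b :: nat \<Rightarrow> bool. \<forall>i. b i \<longrightarrow> i < t} \<subseteq> (\<lambda>S i. i \<in> S) ` Pow {..<t}"
  proof
    fix b :: "nat \<Rightarrow> bool" assume "b \<in> {b. \<forall>i. b i \<longrightarrow> i < t}"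
    then show "b \<in> (\<lambda>S i. i \<in> S) ` Pow {..<t}" by (intro image_eqI[where x="{i. b i}"]) auto
  qed
qed simp

lemma measurable_bounded_predicates:
  fixes b :: "'a \<Rightarrow> nat \<Rightarrow> bool"
  assumes meas: "\<And>i. i < t \<Longrightarrow> Measurable.pred M (\<lambda>x. b x i)" and bounded: "\<And>x i. b x i \<Longrightarrow> i < t"
  shows "b \<in> M \<rightarrow>\<^sub>M count_space {\<beta>. \<forall>i. \<beta> i \<longrightarrow> i < t}"
  unfolding measurable_count_space_eq2[OF finite_bounded_predicates]
proof (intro conjI ballI)
  fix \<beta> assume \<beta>: "\<beta> \<in> {\<beta>. \<forall>i. \<beta> i \<longrightarrow> i < t}"
  have "b x = \<beta>" if "\<forall>i \<in> {..<t}. b x i = \<beta> i" for x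
  proof
    fix i show "b x i = \<beta> i" using that bounded[of x i] \<beta> by (cases "i < t") auto
  qed
  then have "b -` {\<beta>} \<inter> space M = {x \<in> space M. \<forall>i \<in> {..<t}. b x i = \<beta> i}"
    by auto
  also have "\<dots> \<in> sets M"
    using meas by (intro sets.sets_Collect_finite_All) (auto simp: pred_def)
  finally show "b -` {\<beta>} \<inter> space M \<in> sets M" .
qed (use bounded in auto)

lemma measurable_compose_bounded_predicates:
  fixes b c :: "'a \<Rightarrow> nat \<Rightarrow> bool" and F :: "(nat \<Rightarrow> bool) \<Rightarrow> (nat \<Rightarrow> bool) \<Rightarrow> real"
  assumes "\<And>i. i < t \<Longrightarrow> Measurable.pred M (\<lambda>x. b x i)" "\<And>x i. b x i \<Longrightarrow> i < t"
    and "\<And>i. i < t \<Longrightarrow> Measurable.pred M (\<lambda>x. c x i)" "\<And>x i. c x i \<Longrightarrow> i < t"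
  shows "(\<lambda>x. F (b x) (c x)) \<in> borel_measurable M"
proof -
  have countable: "countable {\<beta> :: nat \<Rightarrow> bool. \<forall>i. \<beta> i \<longrightarrow> i < t}"
    by (rule countable_finite[OF finite_bounded_predicates])
  show ?thesis
  proof (rule measurable_compose_countable'[OF _ measurable_bounded_predicates[OF assms(1,2)] countable])
    fix \<beta>
    show "(\<lambda>x. F \<beta> (c x)) \<in> borel_measurable M"
      by (rule measurable_compose_countable'[OF _ measurable_bounded_predicates[OF assms(3,4)] countable])
        simp
  qed
qed

locale saffron_levels =
  fixes g h :: "nat \<Rightarrow> (nat \<Rightarrow> nat set) \<Rightarrow> (nat \<Rightarrow> nat set) \<Rightarrow> real" and E :: "nat \<Rightarrow> nat"
begin

abbreviation alpha :: "(nat \<Rightarrow> real) \<Rightarrow> nat \<Rightarrow> real" where "alpha \<equiv> saff_alpha g h E"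
abbreviation lambda :: "(nat \<Rightarrow> real) \<Rightarrow> nat \<Rightarrow> real" where "lambda \<equiv> saff_lambda g h E"

lemma levels_zero [simp]: "alpha p 0 = 0" "lambda p 0 = 0"
  by (simp_all add: saff_alpha_def saff_lambda_def)

lemma levels_rec:
  assumes "1 \<le> t"
  shows "alpha p t = g t (history E (\<lambda>i. p i \<le> alpha p i) t) (history E (\<lambda>i. p i \<le> lambda p i) t)"
    and "lambda p t = h t (history E (\<lambda>i. p i \<le> alpha p i) t) (history E (\<lambda>i. p i \<le> lambda p i) t)"
proof -
  obtain n where t: "t = Suc n" using assms by (cases t) auto
  define R where "R = (\<lambda>s. if s \<le> n then dec_set E p (fst (saff_lv g h E p n)) s else {})"
  define C where "C = (\<lambda>s. if s \<le> n then dec_set E p (snd (saff_lv g h E p n)) s else {})"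
  have "alpha p t = g t R C" "lambda p t = h t R C"
    by (simp_all add: R_def C_def t saff_alpha_def saff_lambda_def Let_def)
  moreover have "R = history E (\<lambda>i. p i \<le> alpha p i) t" "C = history E (\<lambda>i. p i \<le> lambda p i) t"
    by (auto simp: R_def C_def t history_def dec_set_def saff_lv_eq fun_eq_iff)
  ultimately show "alpha p t = g t (history E (\<lambda>i. p i \<le> alpha p i) t) (history E (\<lambda>i. p i \<le> lambda p i) t)"
    and "lambda p t = h t (history E (\<lambda>i. p i \<le> alpha p i) t) (history E (\<lambda>i. p i \<le> lambda p i) t)"
    by simp_all
qed

lemma levels_causal:
  assumes "\<And>i. E i < t \<Longrightarrow> p i = p' i"
  shows "alpha p t = alpha p' t \<and> lambda p t = lambda p' t"
  using assms
proof (induction t rule: less_induct)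
  case (less t)
  show ?case
  proof (cases "t = 0")
    case False
    then have "1 \<le> t" by simp
    have agree: "(p i \<le> alpha p i \<longleftrightarrow> p' i \<le> alpha p' i) \<and> (p i \<le> lambda p i \<longleftrightarrow> p' i \<le> lambda p' i)"
      if "i < t" "E i < t" for i
    proof -
      have "E j < i \<Longrightarrow> p j = p' j" for j using less.prems that by simp
      then show ?thesis using less.IH[OF \<open>i < t\<close>] less.prems[OF \<open>E i < t\<close>] by simp
    qed
    have "history E (\<lambda>i. p i \<le> alpha p i) t = history E (\<lambda>i. p' i \<le> alpha p' i) t"
      and "history E (\<lambda>i. p i \<le> lambda p i) t = history E (\<lambda>i. p' i \<le> lambda p' i) t"
      by (rule history_cong, use agree in blast)+
    then show ?thesis
      unfolding levels_rec[OF \<open>1 \<le> t\<close>, of p] levels_rec[OF \<open>1 \<le> t\<close>, of p'] by simp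
  qed simp
qed

lemma levels_measurable:
  "(\<lambda>p. alpha p t) \<in> borel_measurable pvalues \<and> (\<lambda>p. lambda p t) \<in> borel_measurable pvalues"
proof (induction t rule: less_induct)
  case (less t)
  show ?case
  proof (cases "t = 0")
    case False
    then have "1 \<le> t" by simp
    \<comment> \<open>The levels at step t are determined by finitely many decisions made before t,
      so they are finite case distinctions over measurable events.\<close>
    define before where "before a p i \<longleftrightarrow> i < t \<and> p i \<le> a p i"
      for a :: "(nat \<Rightarrow> real) \<Rightarrow> nat \<Rightarrow> real" and p i
    have pred_before: "Measurable.pred pvalues (\<lambda>p. before alpha p i)"
      "Measurable.pred pvalues (\<lambda>p. before lambda p i)" if "i < t" for i
    proof -
      have "Measurable.pred pvalues (\<lambda>p. p i \<le> alpha p i)" "Measurable.pred pvalues (\<lambda>p. p i \<le> lambda p i)"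
        using borel_measurable_le[OF pvalues_coord_measurable less.IH[OF that, THEN conjunct1]]
          borel_measurable_le[OF pvalues_coord_measurable less.IH[OF that, THEN conjunct2]]
        by (simp_all add: pred_def)
      then show "Measurable.pred pvalues (\<lambda>p. before alpha p i)" "Measurable.pred pvalues (\<lambda>p. before lambda p i)"
        using that by (simp_all add: before_def)
    qed
    have bounded: "before a p i \<Longrightarrow> i < t" for a p i by (simp add: before_def)
    have history_before: "history E (\<lambda>i. p i \<le> a p i) t = history E (before a p) t" for a p
      by (rule history_cong) (simp add: before_def)
    have alpha_eq: "(\<lambda>p. alpha p t) = (\<lambda>p. g t (history E (before alpha p) t) (history E (before lambda p) t))"
      and lambda_eq: "(\<lambda>p. lambda p t) = (\<lambda>p. h t (history E (before alpha p) t) (history E (before lambda p) t))"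
      using levels_rec[OF \<open>1 \<le> t\<close>] unfolding history_before by simp_all
    show ?thesis
      unfolding alpha_eq lambda_eq
      using measurable_compose_bounded_predicates[OF pred_before(1) bounded pred_before(2) bounded,
          where F="\<lambda>\<beta> \<gamma>. g t (history E \<beta> t) (history E \<gamma> t)"]
        measurable_compose_bounded_predicates[OF pred_before(1) bounded pred_before(2) bounded,
          where F="\<lambda>\<beta> \<gamma>. h t (history E \<beta> t) (history E \<gamma> t)"]
      by (rule conjI)
  qed simp
qed

lemma alpha_measurable [measurable]: "(\<lambda>p. alpha p t) \<in> borel_measurable pvalues"
  and lambda_measurable [measurable]: "(\<lambda>p. lambda p t) \<in> borel_measurable pvalues"
  using levels_measurable by blast+

lemma pred_le_alpha [measurable]: "Measurable.pred pvalues (\<lambda>p. p i \<le> alpha p i)"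
  unfolding pred_def by (rule borel_measurable_le[OF pvalues_coord_measurable alpha_measurable])

lemma fdp_weight_measurable [measurable]: "(\<lambda>p. fdp_weight E p (alpha p) t i) \<in> borel_measurable pvalues"
  unfolding fdp_weight_def real_card_rej_set of_nat_max by measurable

end

locale async_rules = saffron_levels +
  assumes alpha_rule_nonneg: "\<And>t R C. 1 \<le> t \<Longrightarrow> adm_hist t R \<Longrightarrow> adm_hist t C \<Longrightarrow> 0 \<le> g t R C"
    and alpha_rule_le_lambda_rule: "\<And>t R C. 1 \<le> t \<Longrightarrow> adm_hist t R \<Longrightarrow> adm_hist t C \<Longrightarrow> g t R C \<le> h t R C"
    and mono_g: "mono_rule2 g" and mono_h: "mono_rule2 h"
    and dec_time: "\<And>t. t \<le> E t"
begin

lemma alpha_nonneg: "0 \<le> alpha p t"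
  by (cases "t = 0") (simp_all add: levels_rec alpha_rule_nonneg adm_hist_history)

lemma alpha_le_lambda: "alpha p t \<le> lambda p t"
  by (cases "t = 0") (simp_all add: levels_rec alpha_rule_le_lambda_rule adm_hist_history)

lemma levels_mono:
  assumes "\<And>j. p' j \<le> p j \<or> (p' j \<le> alpha p' j \<and> p' j \<le> lambda p' j)"
  shows "alpha p t \<le> alpha p' t \<and> lambda p t \<le> lambda p' t"
proof (induction t rule: less_induct)
  case (less t)
  show ?case
  proof (cases "t = 0")
    case False
    then have "1 \<le> t" by simp
    have grow: "(p i \<le> alpha p i \<longrightarrow> p' i \<le> alpha p' i) \<and> (p i \<le> lambda p i \<longrightarrow> p' i \<le> lambda p' i)"
      if "i < t" for i
      using less.IH[OF that] assms[of i] by linarith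
    have "\<forall>s. history E (\<lambda>i. p i \<le> alpha p i) t s \<subseteq> history E (\<lambda>i. p' i \<le> alpha p' i) t s"
      and "\<forall>s. history E (\<lambda>i. p i \<le> lambda p i) t s \<subseteq> history E (\<lambda>i. p' i \<le> lambda p' i) t s"
      by (intro allI history_mono, use grow in blast)+
    then show ?thesis
      using mono_g mono_h \<open>1 \<le> t\<close> unfolding mono_rule2_def levels_rec[OF \<open>1 \<le> t\<close>]
      by (simp add: adm_hist_history)
  qed simp
qed

lemma rej_set_mono:
  assumes "\<And>j. p' j \<le> p j \<or> (p' j \<le> alpha p' j \<and> p' j \<le> lambda p' j)"
  shows "rej_set E p (alpha p) t \<subseteq> rej_set E p' (alpha p') t"
proof -
  have "p' j \<le> alpha p' j" if "p j \<le> alpha p j" for j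
    using levels_mono[OF assms, of j] assms[of j] that by linarith
  then show ?thesis by (auto simp: rej_set_def)
qed

lemma levels_update_self: "alpha (p(i := x)) i = alpha p i \<and> lambda (p(i := x)) i = lambda p i"
proof (rule levels_causal)
  fix j assume "E j < i"
  then have "j \<noteq> i" using dec_time[of i] by auto
  then show "(p(i := x)) j = p j" by simp
qed

lemma rej_set_subset_update_zero: "rej_set E p (alpha p) t \<subseteq> rej_set E (p(i := 0)) (alpha (p(i := 0))) t"
proof (rule rej_set_mono)
  fix j
  show "(p(i := 0)) j \<le> p j \<or> ((p(i := 0)) j \<le> alpha (p(i := 0)) j \<and> (p(i := 0)) j \<le> lambda (p(i := 0)) j)"
    using alpha_nonneg[of "p(i := 0)" i] alpha_le_lambda[of "p(i := 0)" i] by (cases "j = i") auto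
qed

lemma rej_set_update_zero_eq:
  assumes "p i \<le> alpha p i"
  shows "rej_set E (p(i := 0)) (alpha (p(i := 0))) t = rej_set E p (alpha p) t"
proof
  show "rej_set E (p(i := 0)) (alpha (p(i := 0))) t \<subseteq> rej_set E p (alpha p) t"
  proof (rule rej_set_mono)
    fix j
    show "p j \<le> (p(i := 0)) j \<or> (p j \<le> alpha p j \<and> p j \<le> lambda p j)"
      using assms alpha_le_lambda[of p i] by (cases "j = i") auto
  qed
qed (rule rej_set_subset_update_zero)

abbreviation weight :: "nat \<Rightarrow> (nat \<Rightarrow> real) \<Rightarrow> nat \<Rightarrow> real" where
  "weight t p i \<equiv> fdp_weight E p (alpha p) t i"

lemma weight_update_zero_le: "weight t (p(i := 0)) i \<le> weight t p i"
  using card_mono[OF finite_rej_set rej_set_subset_update_zero[where p=p and i=i and t=t]]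
  by (auto simp: fdp_weight_def of_nat_max intro!: divide_left_mono)

lemma rejected_weight_update_zero:
  "(if p i \<le> alpha p i then weight t p i else 0)
    = (if p i \<le> alpha (p(i := 0)) i then weight t (p(i := 0)) i else 0)"
  using levels_update_self[of p i 0] rej_set_update_zero_eq[where p=p and i=i and t=t] by (auto simp: fdp_weight_def)

end

locale async_setting = prob_space M for M :: "'w measure" +
  fixes P :: "nat \<Rightarrow> 'w \<Rightarrow> real" and H0 :: "nat set" and E :: "nat \<Rightarrow> nat"
  assumes pvalue_measurable [measurable]: "\<And>i. P i \<in> borel_measurable M"
    and null_superuniform: "\<And>i u. i \<in> H0 \<Longrightarrow> 0 \<le> u \<Longrightarrow> u \<le> 1 \<Longrightarrow> prob {\<omega> \<in> space M. P i \<omega> \<le> u} \<le> u"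
    and null_indep: "null_indep M H0 P"
    and dec_time: "\<And>t. t \<le> E t"
begin

abbreviation Pvec :: "'w \<Rightarrow> nat \<Rightarrow> real" where
  "Pvec \<omega> \<equiv> (\<lambda>j. P j \<omega>)"

lemma Pvec_measurable [measurable]: "Pvec \<in> M \<rightarrow>\<^sub>M pvalues"
  by (rule measurable_PiM_single') auto

end

locale async_procedure = async_setting M P H0 E + async_rules g h E
  for M :: "'w measure" and P H0 E g h
begin

lemma rejected_weight_nn_integral_le:
  assumes "i \<in> H0"
  shows "(\<integral>\<^sup>+\<omega>. ennreal (if P i \<omega> \<le> alpha (Pvec \<omega>) i then weight t (Pvec \<omega>) i else 0) \<partial>M)
    \<le> (\<integral>\<^sup>+\<omega>. ennreal (alpha ((Pvec \<omega>)(i := 0)) i * weight t ((Pvec \<omega>)(i := 0)) i) \<partial>M)"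
proof -
  have ind: "indep_var pvalues (\<lambda>\<omega>. (\<lambda>_. 0)(i := P i \<omega>)) pvalues (\<lambda>\<omega>. (Pvec \<omega>)(i := 0))"
    by (rule null_indep_leave_one_out[OF prob_space_axioms null_indep assms])
  have "(\<integral>\<^sup>+\<omega>. ennreal (if P i \<omega> \<le> alpha (Pvec \<omega>) i then weight t (Pvec \<omega>) i else 0) \<partial>M)
    = (\<integral>\<^sup>+\<omega>. ennreal (if ((\<lambda>_. 0)(i := P i \<omega>)) i \<le> alpha ((Pvec \<omega>)(i := 0)) i
        then weight t ((Pvec \<omega>)(i := 0)) i else 0) \<partial>M)"
    using rejected_weight_update_zero[where p="Pvec _" and i=i and t=t] by simp
  also have "\<dots> \<le> (\<integral>\<^sup>+\<omega>. ennreal (alpha ((Pvec \<omega>)(i := 0)) i * weight t ((Pvec \<omega>)(i := 0)) i) \<partial>M)"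
    by (rule superuniform_indep_threshold_le[OF ind, where \<pi>="\<lambda>z. z i"])
      (simp_all add: null_superuniform[OF assms] alpha_nonneg fdp_weight_nonneg)
  finally show ?thesis .
qed

lemma FDR_le_of_weight_bound:
  fixes B :: "nat \<Rightarrow> (nat \<Rightarrow> real) \<Rightarrow> real"
  assumes [measurable]: "\<And>i. B i \<in> borel_measurable pvalues" and B_nonneg: "\<And>i p. 0 \<le> B i p"
    and leave_one_out_le: "\<And>i. i \<in> H0 \<Longrightarrow> i \<in> {1..t} \<Longrightarrow>
      (\<integral>\<^sup>+\<omega>. ennreal (alpha ((Pvec \<omega>)(i := 0)) i * weight t ((Pvec \<omega>)(i := 0)) i) \<partial>M)
        \<le> (\<integral>\<^sup>+\<omega>. ennreal (B i (Pvec \<omega>)) \<partial>M)"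
    and B_sum_le: "\<And>\<omega>. \<omega> \<in> space M \<Longrightarrow> (\<Sum>i\<in>{1..t}. B i (Pvec \<omega>)) \<le> \<alpha>"
  shows "FDR M H0 E P alpha t \<le> \<alpha>"
proof -
  define T where "T i p = (if p i \<le> alpha p i then weight t p i else 0)" for i p
  have [measurable]: "T i \<in> borel_measurable pvalues" for i unfolding T_def by measurable
  have T_nonneg: "0 \<le> T i p" for i p by (simp add: T_def fdp_weight_nonneg)
  obtain \<omega> where "\<omega> \<in> space M" using not_empty by blast
  then have "0 \<le> \<alpha>"
    using B_sum_le B_nonneg by (meson order_trans sum_nonneg)
  have "(\<integral>\<^sup>+\<omega>. ennreal (\<Sum>i\<in>{1..t} \<inter> H0. T i (Pvec \<omega>)) \<partial>M)
      = (\<Sum>i\<in>{1..t} \<inter> H0. \<integral>\<^sup>+\<omega>. ennreal (T i (Pvec \<omega>)) \<partial>M)"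
    by (rule nn_integral_sum_ennreal) (simp_all add: T_nonneg)
  also have "\<dots> \<le> (\<Sum>i\<in>{1..t} \<inter> H0. \<integral>\<^sup>+\<omega>. ennreal (B i (Pvec \<omega>)) \<partial>M)"
    by (intro sum_mono order_trans[OF _ leave_one_out_le])
      (auto simp: T_def intro: rejected_weight_nn_integral_le)
  also have "\<dots> \<le> (\<Sum>i\<in>{1..t}. \<integral>\<^sup>+\<omega>. ennreal (B i (Pvec \<omega>)) \<partial>M)"
    by (rule sum_mono2) auto
  also have "\<dots> = (\<integral>\<^sup>+\<omega>. ennreal (\<Sum>i\<in>{1..t}. B i (Pvec \<omega>)) \<partial>M)"
    by (rule nn_integral_sum_ennreal[symmetric]) (simp_all add: B_nonneg)
  also have "\<dots> \<le> (\<integral>\<^sup>+\<omega>. ennreal \<alpha> \<partial>M)"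
    by (intro nn_integral_mono ennreal_leI B_sum_le)
  also have "\<dots> = ennreal \<alpha>"
    by (simp add: emeasure_space_1)
  finally have bound: "(\<integral>\<^sup>+\<omega>. ennreal (\<Sum>i\<in>{1..t} \<inter> H0. T i (Pvec \<omega>)) \<partial>M) \<le> ennreal \<alpha>" .
  have "FDR M H0 E P alpha t = expectation (\<lambda>\<omega>. \<Sum>i\<in>{1..t} \<inter> H0. T i (Pvec \<omega>))"
    by (simp add: FDR_def FDP_eq_sum_fdp_weight T_def)
  also have "\<dots> = enn2real (\<integral>\<^sup>+\<omega>. ennreal (\<Sum>i\<in>{1..t} \<inter> H0. T i (Pvec \<omega>)) \<partial>M)"
    by (rule integral_eq_nn_integral) (auto intro: sum_nonneg T_nonneg)
  also have "\<dots> \<le> \<alpha>"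
    by (rule enn2real_leI[OF \<open>0 \<le> \<alpha>\<close> bound])
  finally show ?thesis .
qed

end

locale saffron_procedure = async_procedure +
  assumes lambda_rule_lt_1: "\<And>t R C. 1 \<le> t \<Longrightarrow> adm_hist t R \<Longrightarrow> adm_hist t C \<Longrightarrow> h t R C < 1"
begin

lemma lambda_lt_1: "lambda p j < 1"
  using lambda_rule_lt_1 by (cases "j = 0") (simp_all add: levels_rec adm_hist_history)

lemma alpha_ratio_nonneg: "0 \<le> alpha p i / (1 - lambda p i)"
  using alpha_nonneg[of p i] lambda_lt_1[of p i] by simp

definition candidate_weight :: "nat \<Rightarrow> (nat \<Rightarrow> real) \<Rightarrow> nat \<Rightarrow> real" where
  "candidate_weight t p i = alpha p i / (1 - lambda p i) * weight t p i"

lemma candidate_weight_measurable [measurable]: "(\<lambda>p. candidate_weight t p i) \<in> borel_measurable pvalues"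
  unfolding candidate_weight_def by measurable

lemma candidate_weight_nonneg: "0 \<le> candidate_weight t p i"
  unfolding candidate_weight_def by (intro mult_nonneg_nonneg alpha_ratio_nonneg fdp_weight_nonneg)

lemma candidate_weight_update_zero_le: "candidate_weight t (p(i := 0)) i \<le> candidate_weight t p i"
proof -
  have "alpha p i / (1 - lambda p i) * weight t (p(i := 0)) i \<le> alpha p i / (1 - lambda p i) * weight t p i"
    by (rule mult_left_mono[OF weight_update_zero_le alpha_ratio_nonneg])
  then show ?thesis
    using levels_update_self[of p i 0] by (simp add: candidate_weight_def)
qed

lemma leave_one_out_nn_integral_le_candidate:
  assumes "i \<in> H0"
  shows "(\<integral>\<^sup>+\<omega>. ennreal (alpha ((Pvec \<omega>)(i := 0)) i * weight t ((Pvec \<omega>)(i := 0)) i) \<partial>M)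
    \<le> (\<integral>\<^sup>+\<omega>. ennreal (if lambda (Pvec \<omega>) i < P i \<omega> then candidate_weight t (Pvec \<omega>) i else 0) \<partial>M)"
proof -
  let ?Q = "\<lambda>\<omega>. (Pvec \<omega>)(i := 0)"
  have "(\<integral>\<^sup>+\<omega>. ennreal (alpha (?Q \<omega>) i * weight t (?Q \<omega>) i) \<partial>M)
      = (\<integral>\<^sup>+\<omega>. ennreal (candidate_weight t (?Q \<omega>) i * (1 - lambda (?Q \<omega>) i)) \<partial>M)"
    by (intro nn_integral_cong) (simp add: candidate_weight_def less_imp_neq[OF lambda_lt_1])
  also have "\<dots> \<le> (\<integral>\<^sup>+\<omega>. ennreal (if lambda (?Q \<omega>) i < ((\<lambda>_. 0)(i := P i \<omega>)) i
      then candidate_weight t (?Q \<omega>) i else 0) \<partial>M)"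
    by (rule superuniform_indep_threshold_ge[where \<pi>="\<lambda>z. z i" and l="\<lambda>q. lambda q i",
          OF null_indep_leave_one_out[OF prob_space_axioms null_indep assms]])
      (simp_all add: null_superuniform[OF assms] candidate_weight_nonneg
        order_trans[OF alpha_nonneg alpha_le_lambda])
  also have "\<dots> \<le> (\<integral>\<^sup>+\<omega>. ennreal (if lambda (Pvec \<omega>) i < P i \<omega> then candidate_weight t (Pvec \<omega>) i else 0) \<partial>M)"
    using levels_update_self candidate_weight_update_zero_le candidate_weight_nonneg
    by (intro nn_integral_mono ennreal_leI) auto
  finally show ?thesis .
qed

lemma candidate_weight_le:
  "(if lambda p i < p i then candidate_weight t p i else 0)
    \<le> alpha p i / (1 - lambda p i) * ((if p i > lambda p i \<and> E i < t then 1 else 0) + (if E i \<ge> t then 1 else 0))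
      / real (max (card (rej_set E p (alpha p) t)) 1)"
proof -
  let ?D = "real (max (card (rej_set E p (alpha p) t)) 1)"
  have "(if lambda p i < p i then candidate_weight t p i else 0)
      = alpha p i / (1 - lambda p i) * ((if lambda p i < p i \<and> E i \<le> t then 1 else 0) / ?D)"
    by (simp add: candidate_weight_def fdp_weight_def)
  also have "\<dots> \<le> alpha p i / (1 - lambda p i)
      * (((if p i > lambda p i \<and> E i < t then 1 else 0) + (if E i \<ge> t then 1 else 0)) / ?D)"
    using alpha_ratio_nonneg by (intro mult_left_mono divide_right_mono) auto
  finally show ?thesis by simp
qed

end

context async_setting
begin

lemma lord_async_FDR_le:
  assumes f_nonneg: "\<forall>t\<ge>1. \<forall>R. adm_hist t R \<longrightarrow> 0 \<le> f t R" and f_mono: "mono_rule1 f"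
    and budget: "\<forall>\<omega>\<in>space M. \<forall>t. (\<Sum>j\<in>{1..t}. lord_alpha f E (Pvec \<omega>) j)
      \<le> \<alpha> * real (max (rej_before E (Pvec \<omega>) (lord_alpha f E (Pvec \<omega>)) t) 1)"
  shows "FDR M H0 E P (lord_alpha f E) t \<le> \<alpha>"
proof -
  define g where "g = (\<lambda>t R (C :: nat \<Rightarrow> nat set). f t R)"
  have "async_rules g g E"
    using f_nonneg f_mono dec_time by unfold_locales (auto simp: g_def mono_rule1_def mono_rule2_def)
  then interpret async_procedure M P H0 E g g
    by intro_locales
  have lord: "lord_alpha f E = alpha"
    by (simp add: g_def lord_alpha_eq_saff_alpha)
  show ?thesis unfolding lord
  proof (rule FDR_le_of_weight_bound[where B="\<lambda>i p. alpha p i * weight t p i"])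
    show "(\<lambda>p. alpha p i * weight t p i) \<in> borel_measurable pvalues" for i
      by measurable
    show "0 \<le> alpha p i * weight t p i" for i p
      by (simp add: alpha_nonneg fdp_weight_nonneg)
    show "(\<integral>\<^sup>+\<omega>. ennreal (alpha ((Pvec \<omega>)(i := 0)) i * weight t ((Pvec \<omega>)(i := 0)) i) \<partial>M)
        \<le> (\<integral>\<^sup>+\<omega>. ennreal (alpha (Pvec \<omega>) i * weight t (Pvec \<omega>) i) \<partial>M)" for i
      using levels_update_self weight_update_zero_le alpha_nonneg
      by (intro nn_integral_mono ennreal_leI) (simp add: mult_left_mono)
    show "(\<Sum>i\<in>{1..t}. alpha (Pvec \<omega>) i * weight t (Pvec \<omega>) i) \<le> \<alpha>" if "\<omega> \<in> space M" for \<omega>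
    proof -
      let ?D = "real (max (card (rej_set E (Pvec \<omega>) (alpha (Pvec \<omega>)) t)) 1)"
      have "(\<Sum>i\<in>{1..t}. alpha (Pvec \<omega>) i * weight t (Pvec \<omega>) i) \<le> (\<Sum>i\<in>{1..t}. alpha (Pvec \<omega>) i / ?D)"
        by (intro sum_mono) (simp add: fdp_weight_def alpha_nonneg)
      also have "\<dots> \<le> \<alpha>"
        using budget that unfolding sum_divide_distrib[symmetric] lord
        by (intro divide_rej_count_le) (simp_all add: sum_nonneg alpha_nonneg)
      finally show ?thesis .
    qed
  qed
qed

lemma saff_async_FDR_le:
  assumes rules: "\<forall>t\<ge>1. \<forall>R C. adm_hist t R \<and> adm_hist t C \<longrightarrow> 0 \<le> g t R C \<and> g t R C \<le> h t R C \<and> h t R C < 1"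
    and g_mono: "mono_rule2 g" and h_mono: "mono_rule2 h"
    and budget: "\<forall>\<omega>\<in>space M. \<forall>t.
      (\<Sum>j\<in>{1..t}. saff_alpha g h E (Pvec \<omega>) j / (1 - saff_lambda g h E (Pvec \<omega>) j)
         * ((if P j \<omega> > saff_lambda g h E (Pvec \<omega>) j \<and> E j < t then 1 else 0) + (if E j \<ge> t then 1 else 0)))
      \<le> \<alpha> * real (max (rej_before E (Pvec \<omega>) (saff_alpha g h E (Pvec \<omega>)) t) 1)"
  shows "FDR M H0 E P (saff_alpha g h E) t \<le> \<alpha>"
proof -
  have "async_rules g h E"
    using rules g_mono h_mono dec_time by unfold_locales auto
  then interpret async_procedure M P H0 E g h
    by intro_locales
  interpret saffron_procedure M P H0 E g h
    using rules by unfold_locales auto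
  show ?thesis
  proof (rule FDR_le_of_weight_bound[where B="\<lambda>i p. if lambda p i < p i then candidate_weight t p i else 0"])
    show "(\<lambda>p. if lambda p i < p i then candidate_weight t p i else 0) \<in> borel_measurable pvalues" for i
      by measurable
    show "0 \<le> (if lambda p i < p i then candidate_weight t p i else 0)" for i p
      by (simp add: candidate_weight_nonneg)
    show "(\<integral>\<^sup>+\<omega>. ennreal (alpha ((Pvec \<omega>)(i := 0)) i * weight t ((Pvec \<omega>)(i := 0)) i) \<partial>M)
        \<le> (\<integral>\<^sup>+\<omega>. ennreal (if lambda (Pvec \<omega>) i < P i \<omega> then candidate_weight t (Pvec \<omega>) i else 0) \<partial>M)"
      if "i \<in> H0" for i
      using that by (rule leave_one_out_nn_integral_le_candidate)
    show "(\<Sum>i\<in>{1..t}. if lambda (Pvec \<omega>) i < P i \<omega> then candidate_weight t (Pvec \<omega>) i else 0) \<le> \<alpha>"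
      if "\<omega> \<in> space M" for \<omega>
    proof -
      let ?p = "Pvec \<omega>"
      have "(\<Sum>i\<in>{1..t}. if lambda ?p i < ?p i then candidate_weight t ?p i else 0)
        \<le> (\<Sum>i\<in>{1..t}. alpha ?p i / (1 - lambda ?p i)
            * ((if ?p i > lambda ?p i \<and> E i < t then 1 else 0) + (if E i \<ge> t then 1 else 0))
            / real (max (card (rej_set E ?p (alpha ?p) t)) 1))"
        by (rule sum_mono) (rule candidate_weight_le)
      also have "\<dots> \<le> \<alpha>"
        using budget that unfolding sum_divide_distrib[symmetric]
        by (intro divide_rej_count_le) (auto intro!: sum_nonneg mult_nonneg_nonneg alpha_ratio_nonneg)
      finally show ?thesis .
    qed
  qed
qed

end

theorem theorem3:
  fixes M :: "'w measure" and P :: "nat \<Rightarrow> 'w \<Rightarrow> real" and H0 :: "nat set"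
    and E :: "nat \<Rightarrow> nat" and \<alpha> :: real
  assumes "prob_space M"
    and meas: "\<And>i. P i \<in> borel_measurable M"
    and superunif: "\<And>i u. i \<in> H0 \<Longrightarrow> 0 \<le> u \<Longrightarrow> u \<le> 1 \<Longrightarrow>
                       measure M {\<omega> \<in> space M. P i \<omega> \<le> u} \<le> u"
    and indep: "null_indep M H0 P"
    and dec_time: "\<And>t. t \<le> E t"
  shows
   "(\<forall>f. (\<forall>t\<ge>1. \<forall>R. adm_hist t R \<longrightarrow> 0 \<le> f t R) \<and> mono_rule1 f \<and>
         (\<forall>\<omega>\<in>space M. \<forall>t.
            (\<Sum>j\<in>{1..t}. lord_alpha f E (\<lambda>i. P i \<omega>) j)
              \<le> \<alpha> * real (max (rej_before E (\<lambda>i. P i \<omega>) (lord_alpha f E (\<lambda>i. P i \<omega>)) t) 1))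
      \<longrightarrow> (\<forall>t. FDR M H0 E P (lord_alpha f E) t \<le> \<alpha>))
  \<and> (\<forall>g h. (\<forall>t\<ge>1. \<forall>R C. adm_hist t R \<and> adm_hist t C \<longrightarrow>
                0 \<le> g t R C \<and> g t R C \<le> h t R C \<and> h t R C < 1) \<and>
         mono_rule2 g \<and> mono_rule2 h \<and>
         (\<forall>\<omega>\<in>space M. \<forall>t.
            (\<Sum>j\<in>{1..t}. saff_alpha g h E (\<lambda>i. P i \<omega>) j / (1 - saff_lambda g h E (\<lambda>i. P i \<omega>) j)
               * ((if P j \<omega> > saff_lambda g h E (\<lambda>i. P i \<omega>) j \<and> E j < t then 1 else 0)
                  + (if E j \<ge> t then 1 else 0)))
              \<le> \<alpha> * real (max (rej_before E (\<lambda>i. P i \<omega>) (saff_alpha g h E (\<lambda>i. P i \<omega>)) t) 1))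
      \<longrightarrow> (\<forall>t. FDR M H0 E P (saff_alpha g h E) t \<le> \<alpha>))"
proof -
  interpret async_setting M P H0 E
    by (intro async_setting.intro async_setting_axioms.intro) (use assms in auto)
  show ?thesis
    by (intro conjI allI impI; elim conjE; rule lord_async_FDR_le saff_async_FDR_le; assumption)
qed

end
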